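(* Let $k,\ell$ be positive integers, $e=(1,\dots,1)^\top\in\mathbb R^k$, and $(\Omega,\mathcal F,\mathcal P)$ a probability space. Let $A(\omega)\in\mathbb R^{k\times k}$, $B(\omega)\in\mathbb R^{k\times\ell}$, $C(\omega)\in\mathbb R^{\ell\times k}$, $D(\omega)\in\mathbb R^{\ell\times\ell}$, $p(\omega)\in\mathbb R^k$, $q(\omega)\in\mathbb R^\ell$ depend measurably on $\omega\in\Omega$, and set $F(x,u,\omega)=\big(A(\omega)x+B(\omega)u+p(\omega),\ C(\omega)x+D(\omega)u+q(\omega)\big)$. Define $$\widetilde F_1(x,u,t,\omega)=A(\omega)(x+te)+B(\omega)u+p(\omega)\in\mathbb R^k,$$ $$\widetilde F_2(x,u,t,\omega)=\begin{pmatrix}[tC(\omega)+ue^\top A(\omega)](x+te)+ue^\top[B(\omega)u+p(\omega)]+t[D(\omega)u+q(\omega)]\\ t^2-\|u\|^2\end{pmatrix}\in\mathbb R^{\ell+1}.$$ Let $x\in\mathbb R^k$, $u\in\mathbb R^\ell$, $z=(x,u)$, and suppose $u\ne0$ and $C(\omega)x+D(\omega)u+q(\omega)\neq0$. Then $z$ is a solution of the stochastic linear complementarity problem on $L(k,\ell)$, i.e. almost surely in $\omega$, $$(x,u)\in L(k,\ell),\quad F(x,u,\omega)\in M(k,\ell),\quad \langle (x,u),F(x,u,\omega)\rangle=0,$$ if and only if there exists $t>0$ such that $\tilde z:=(x-te,u,t)\in\mathbb R^{k+\ell+1}$ is a solution of the stochastic mixed complementarity problem, i.e., writing $\tilde x=x-te$,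 almost surely in $\omega$, $$\widetilde F_2(\tilde x,u,t,\omega)=0,\quad \tilde x\ge0,\quad \widetilde F_1(\tilde x,u,t,\omega)\ge0,\quad \tilde x^\top\widetilde F_1(\tilde x,u,t,\omega)=0.$$
   Context: $\|\cdot\|$ is the Euclidean norm and $\langle\cdot,\cdot\rangle$ the standard inner product on $\mathbb R^k\times\mathbb R^\ell$. The extended second order cone is $L(k,\ell)=\{(x,u)\in\mathbb R^k\times\mathbb R^\ell: x\ge\|u\|e\}$ (componentwise inequality) and its dual is $M(k,\ell)=\{(x,u)\in\mathbb R^k\times\mathbb R^\ell: e^\top x\ge\|u\|,\ x\ge0\}$. *)

theory Defs
  imports "HOL-Analysis.Analysis" "HOL-Probability.Probability"
begin

definition extL :: "(real^'k) \<Rightarrow> (real^'l) \<Rightarrow> bool" where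
  "extL x u \<longleftrightarrow> (\<forall>i. x $ i \<ge> norm u)"

definition extM :: "(real^'k) \<Rightarrow> (real^'l) \<Rightarrow> bool" where
  "extM x u \<longleftrightarrow> vec 1 \<bullet> x \<ge> norm u \<and> (\<forall>i. x $ i \<ge> 0)"

definition F1 :: "real^'k^'k \<Rightarrow> real^'l^'k \<Rightarrow> real^'k \<Rightarrow> real^'k \<Rightarrow> real^'l \<Rightarrow> real^'k" where
  "F1 A B p x u = A *v x + B *v u + p"

definition F2 :: "real^'k^'l \<Rightarrow> real^'l^'l \<Rightarrow> real^'l \<Rightarrow> real^'k \<Rightarrow> real^'l \<Rightarrow> real^'l" where
  "F2 C D q x u = C *v x + D *v u + q"

definition Ft1 :: "real^'k^'k \<Rightarrow> real^'l^'k \<Rightarrow> real^'k \<Rightarrow> real^'k \<Rightarrow> real^'l \<Rightarrow> real \<Rightarrow> real^'k" where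
  "Ft1 A B p x u t = A *v (x + t *\<^sub>R vec 1) + B *v u + p"

text \<open>Ftilde_2(x,u,t) in R^(l+1), represented as a pair (first l components, last component):
  ([t C + u e^T A](x + t e) + u e^T [B u + p] + t [D u + q],  t^2 - norm u ^ 2).\<close>
definition Ft2 :: "real^'k^'k \<Rightarrow> real^'l^'k \<Rightarrow> real^'k^'l \<Rightarrow> real^'l^'l \<Rightarrow> real^'k \<Rightarrow> real^'l
    \<Rightarrow> real^'k \<Rightarrow> real^'l \<Rightarrow> real \<Rightarrow> (real^'l) \<times> real" where
  "Ft2 A B C D p q x u t =
     (t *\<^sub>R (C *v (x + t *\<^sub>R vec 1)) + (vec 1 \<bullet> (A *v (x + t *\<^sub>R vec 1))) *\<^sub>R u
       + (vec 1 \<bullet> (B *v u + p)) *\<^sub>R u + t *\<^sub>R (D *v u + q),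
      t\<^sup>2 - (norm u)\<^sup>2)"

end

theory Submission imports Defs begin

(* For (x,u) in L and (a,b) in M, complementarity x.a + u.b = 0 forces equality in the chain
   x.a >= |u| (e.a) >= |u| |b| >= -(u.b). The first equality says that x - |u| e is
   complementary to a; the other two (equality in Cauchy-Schwarz) say |u| b + (e.a) u = 0.
   Writing x = x' + t e with t = |u| turns these into the mixed complementarity system, whose
   last equation t^2 = |u|^2 in turn pins down the shift t. *)

lemma vec1_inner_nonneg:
  fixes a :: "real^'n"
  assumes "\<forall>i. 0 \<le> a $ i"
  shows "0 \<le> vec 1 \<bullet> a"
  using assms by (simp add: inner_vec_def sum_nonneg)

lemma inner_ge_lower_bound_vec1:
  fixes a x :: "real^'n"
  assumes "\<forall>i. 0 \<le> a $ i" and "\<forall>i. c \<le> x $ i"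
  shows "c * (vec 1 \<bullet> a) \<le> x \<bullet> a"
proof -
  have "c * (vec 1 \<bullet> a) = (\<Sum>i\<in>UNIV. c * a $ i)"
    by (simp add: inner_vec_def sum_distrib_left)
  also have "\<dots> \<le> (\<Sum>i\<in>UNIV. x $ i * a $ i)"
    by (rule sum_mono) (simp add: assms mult_right_mono)
  also have "\<dots> = x \<bullet> a"
    by (simp add: inner_vec_def)
  finally show ?thesis .
qed

lemma inner_diff_vec1_left:
  fixes a x :: "real^'n"
  shows "(x - t *\<^sub>R vec 1) \<bullet> a = x \<bullet> a - t * (vec 1 \<bullet> a)"
  by (simp add: inner_diff_left)

lemma extL_extM_complementary_imp_shifted:
  fixes x a :: "real^'k" and u b :: "real^'l"
  assumes u: "u \<noteq> 0" and "extL x u" and "extM a b" and compl: "x \<bullet> a + u \<bullet> b = 0"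
  shows "norm u *\<^sub>R b + (vec 1 \<bullet> a) *\<^sub>R u = 0" and "(x - norm u *\<^sub>R vec 1) \<bullet> a = 0"
proof -
  have x_ge: "\<forall>i. norm u \<le> x $ i" and a_nonneg: "\<forall>i. 0 \<le> a $ i" and b_le: "norm b \<le> vec 1 \<bullet> a"
    using assms by (auto simp: extL_def extM_def)
  have nu: "0 < norm u"
    using u by simp
  have xa_ge: "norm u * (vec 1 \<bullet> a) \<le> x \<bullet> a"
    using a_nonneg x_ge by (rule inner_ge_lower_bound_vec1)
  have ea_ge: "norm u * norm b \<le> norm u * (vec 1 \<bullet> a)"
    using b_le nu by (simp add: mult_left_mono)
  have ub_ge: "- (u \<bullet> b) \<le> norm u * norm b"
    by (rule abs_le_D2[OF Cauchy_Schwarz_ineq2])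
  have xa: "x \<bullet> a = norm u * (vec 1 \<bullet> a)"
    using xa_ge ea_ge ub_ge compl by linarith
  have "norm u * (vec 1 \<bullet> a) = norm u * norm b"
    using xa_ge ea_ge ub_ge compl by linarith
  with nu have ea: "vec 1 \<bullet> a = norm b"
    by simp
  have "u \<bullet> (- b) = norm u * norm (- b)"
    using xa_ge ea_ge ub_ge compl by simp
  then have "norm u *\<^sub>R (- b) = norm b *\<^sub>R u"
    using norm_cauchy_schwarz_eq[of u "- b"] by simp
  then have "norm b *\<^sub>R u + norm u *\<^sub>R b = 0"
    by (metis add.left_inverse scaleR_minus_right)
  then show "norm u *\<^sub>R b + (vec 1 \<bullet> a) *\<^sub>R u = 0"
    using ea by (simp add: add.commute)
  show "(x - norm u *\<^sub>R vec 1) \<bullet> a = 0"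
    unfolding inner_diff_vec1_left xa by simp
qed

lemma shifted_imp_extL_extM_complementary:
  fixes x a :: "real^'k" and u b :: "real^'l"
  assumes u: "u \<noteq> 0"
    and eq: "norm u *\<^sub>R b + (vec 1 \<bullet> a) *\<^sub>R u = 0"
    and x_ge: "\<forall>i. 0 \<le> (x - norm u *\<^sub>R vec 1) $ i" and a_nonneg: "\<forall>i. 0 \<le> a $ i"
    and shifted_compl: "(x - norm u *\<^sub>R vec 1) \<bullet> a = 0"
  shows "extL x u" and "extM a b" and "x \<bullet> a + u \<bullet> b = 0"
proof -
  have nu: "0 < norm u"
    using u by simp
  have ea: "0 \<le> vec 1 \<bullet> a"
    using a_nonneg by (rule vec1_inner_nonneg)
  have b: "norm u *\<^sub>R b = - (vec 1 \<bullet> a) *\<^sub>R u"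
    using eq by (simp add: eq_neg_iff_add_eq_0)
  then have "norm u * norm b = (vec 1 \<bullet> a) * norm u"
    using ea by (metis norm_minus_cancel norm_scaleR abs_of_nonneg norm_ge_zero scaleR_minus_left)
  with nu have nb: "norm b = vec 1 \<bullet> a"
    by simp
  have "norm u * (u \<bullet> b) = u \<bullet> (norm u *\<^sub>R b)"
    by simp
  also have "\<dots> = norm u * (- (vec 1 \<bullet> a) * norm u)"
    by (simp add: b power2_norm_eq_inner[symmetric] power2_eq_square)
  finally have "u \<bullet> b = - (vec 1 \<bullet> a) * norm u"
    using nu by (metis mult_left_cancel less_irrefl)
  moreover have "x \<bullet> a = norm u * (vec 1 \<bullet> a)"
    using shifted_compl unfolding inner_diff_vec1_left by simp
  ultimately show "x \<bullet> a + u \<bullet> b = 0"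
    by simp
  show "extL x u"
    using x_ge by (simp add: extL_def)
  show "extM a b"
    using nb a_nonneg by (simp add: extM_def)
qed

lemma extL_extM_complementary_iff_shifted:
  fixes x a :: "real^'k" and u b :: "real^'l"
  assumes "u \<noteq> 0"
  shows "(extL x u \<and> extM a b \<and> x \<bullet> a + u \<bullet> b = 0) \<longleftrightarrow>
    (norm u *\<^sub>R b + (vec 1 \<bullet> a) *\<^sub>R u = 0 \<and> (\<forall>i. 0 \<le> (x - norm u *\<^sub>R vec 1) $ i)
      \<and> (\<forall>i. 0 \<le> a $ i) \<and> (x - norm u *\<^sub>R vec 1) \<bullet> a = 0)"
proof
  assume "extL x u \<and> extM a b \<and> x \<bullet> a + u \<bullet> b = 0"
  then show "norm u *\<^sub>R b + (vec 1 \<bullet> a) *\<^sub>R u = 0 \<and> (\<forall>i. 0 \<le> (x - norm u *\<^sub>R vec 1) $ i)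
      \<and> (\<forall>i. 0 \<le> a $ i) \<and> (x - norm u *\<^sub>R vec 1) \<bullet> a = 0"
    using extL_extM_complementary_imp_shifted[OF assms, of x a b]
    by (simp add: extL_def extM_def)
next
  assume "norm u *\<^sub>R b + (vec 1 \<bullet> a) *\<^sub>R u = 0 \<and> (\<forall>i. 0 \<le> (x - norm u *\<^sub>R vec 1) $ i)
      \<and> (\<forall>i. 0 \<le> a $ i) \<and> (x - norm u *\<^sub>R vec 1) \<bullet> a = 0"
  then show "extL x u \<and> extM a b \<and> x \<bullet> a + u \<bullet> b = 0"
    using shifted_imp_extL_extM_complementary[OF assms, of b a x] by blast
qed

lemma Ft1_shift: "Ft1 A B p (x - t *\<^sub>R vec 1) u t = F1 A B p x u"
  by (simp add: Ft1_def F1_def)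

lemma Ft2_shift:
  "Ft2 A B C D p q (x - t *\<^sub>R vec 1) u t =
     (t *\<^sub>R F2 C D q x u + (vec 1 \<bullet> F1 A B p x u) *\<^sub>R u, t\<^sup>2 - (norm u)\<^sup>2)"
  by (simp add: Ft2_def F2_def F1_def algebra_simps inner_add_right)

lemma mixed_complementarity_shift_eq_norm:
  assumes "0 < t" and "Ft2 A B C D p q (x - t *\<^sub>R vec 1) u t = (0, 0)"
  shows "t = norm u"
proof -
  have "t\<^sup>2 = (norm u)\<^sup>2"
    using assms(2) unfolding Ft2_shift by simp
  with \<open>0 < t\<close> show ?thesis
    by (simp add: power2_eq_iff_nonneg)
qed

lemma complementarity_iff_mixed_complementarity:
  assumes "u \<noteq> 0"
  shows "(extL x u \<and> extM (F1 A B p x u) (F2 C D q x u)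
            \<and> x \<bullet> F1 A B p x u + u \<bullet> F2 C D q x u = 0) \<longleftrightarrow>
    (Ft2 A B C D p q (x - norm u *\<^sub>R vec 1) u (norm u) = (0, 0)
      \<and> (\<forall>i. (x - norm u *\<^sub>R vec 1) $ i \<ge> 0)
      \<and> (\<forall>i. Ft1 A B p (x - norm u *\<^sub>R vec 1) u (norm u) $ i \<ge> 0)
      \<and> (x - norm u *\<^sub>R vec 1) \<bullet> Ft1 A B p (x - norm u *\<^sub>R vec 1) u (norm u) = 0)"
  unfolding Ft1_shift Ft2_shift
  by (simp add: extL_extM_complementary_iff_shifted[OF assms])

lemma eventually_iff_ex_pos_param:
  fixes t0 :: "'a::{zero,order}"
  assumes "0 < t0"
    and "\<And>t w. 0 < t \<Longrightarrow> Q t w \<Longrightarrow> t = t0"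
    and "\<And>w. P w \<longleftrightarrow> Q t0 w"
  shows "eventually P F \<longleftrightarrow> (\<exists>t>0. eventually (Q t) F)"
proof
  assume "eventually P F"
  then have "eventually (Q t0) F"
    by (rule eventually_mono) (simp add: assms(3))
  with assms(1) show "\<exists>t>0. eventually (Q t) F"
    by blast
next
  assume "\<exists>t>0. eventually (Q t) F"
  then obtain t where "0 < t" and "eventually (Q t) F"
    by blast
  then show "eventually P F"
    by (elim eventually_mono) (metis assms(2,3))
qed

theorem mainTheorem3:
  fixes M :: "'w measure"
    and A :: "'w \<Rightarrow> real^'k^'k" and B :: "'w \<Rightarrow> real^'l^'k"
    and C :: "'w \<Rightarrow> real^'k^'l" and D :: "'w \<Rightarrow> real^'l^'l"
    and p :: "'w \<Rightarrow> real^'k" and q :: "'w \<Rightarrow> real^'l"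
    and x :: "real^'k" and u :: "real^'l"
  assumes "prob_space M"
    and "A \<in> borel_measurable M" and "B \<in> borel_measurable M"
    and "C \<in> borel_measurable M" and "D \<in> borel_measurable M"
    and "p \<in> borel_measurable M" and "q \<in> borel_measurable M"
    and "u \<noteq> 0"
    and "\<forall>\<omega>\<in>space M. F2 (C \<omega>) (D \<omega>) (q \<omega>) x u \<noteq> 0"
  shows "(AE \<omega> in M. extL x u
            \<and> extM (F1 (A \<omega>) (B \<omega>) (p \<omega>) x u) (F2 (C \<omega>) (D \<omega>) (q \<omega>) x u)
            \<and> x \<bullet> F1 (A \<omega>) (B \<omega>) (p \<omega>) x u + u \<bullet> F2 (C \<omega>) (D \<omega>) (q \<omega>) x u = 0)
    \<longleftrightarrow>
    (\<exists>t>0. AE \<omega> in M.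
        Ft2 (A \<omega>) (B \<omega>) (C \<omega>) (D \<omega>) (p \<omega>) (q \<omega>) (x - t *\<^sub>R vec 1) u t = (0, 0)
      \<and> (\<forall>i. (x - t *\<^sub>R vec 1) $ i \<ge> 0)
      \<and> (\<forall>i. Ft1 (A \<omega>) (B \<omega>) (p \<omega>) (x - t *\<^sub>R vec 1) u t $ i \<ge> 0)
      \<and> (x - t *\<^sub>R vec 1) \<bullet> Ft1 (A \<omega>) (B \<omega>) (p \<omega>) (x - t *\<^sub>R vec 1) u t = 0)"
proof (rule eventually_iff_ex_pos_param)
  show "0 < norm u"
    using \<open>u \<noteq> 0\<close> by simp
qed (use mixed_complementarity_shift_eq_norm
      complementarity_iff_mixed_complementarity[OF \<open>u \<noteq> 0\<close>] in blast)+

end
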